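(* Let $(L,L')$ be a pair of commensurable $K$-lattices, $L=(\Lambda,\phi)$, $L'=(\Lambda',\phi')$, whose classes modulo scaling coincide, i.e. $L'=\lambda L$ for some $\lambda\in\mathbb C^*$. Then either $L=L'$ or $\phi=\phi'=0$.
   Context: $K$ is an imaginary quadratic field with a fixed embedding $K\subset\mathbb C$, $\mathcal O$ its ring of integers. A $K$-lattice $(\Lambda,\phi)$: finitely generated $\mathcal O$-submodule $\Lambda\subset\mathbb C$ with $\Lambda\otimes_{\mathcal O}K\cong K$ and $\mathcal O$-module map $\phi:K/\mathcal O\to K\Lambda/\Lambda$; commensurability: $K\Lambda_1=K\Lambda_2$ and $\phi_1=\phi_2$ mod $\Lambda_1+\Lambda_2$; scaling $\lambda(\Lambda,\phi)=(\lambda\Lambda,\lambda\phi)$. *)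

theory Defs
  imports "HOL-Analysis.Analysis" "HOL-Computational_Algebra.Computational_Algebra"
begin

text \<open>The imaginary quadratic field K = Q(sqrt(-d)) inside C, for d a positive squarefree integer.
  Every imaginary quadratic field, with its embedding into C, is of this form.\<close>
definition imag_quad_field :: "nat \<Rightarrow> complex set" where
  "imag_quad_field d = {of_real (of_rat a) + of_real (of_rat b) * \<i> * of_real (sqrt (real d)) | a b. True}"

definition alg_int :: "complex \<Rightarrow> bool" where
  "alg_int z \<longleftrightarrow> (\<exists>p :: int poly. lead_coeff p = 1 \<and> poly (map_poly of_int p) z = 0)"

definition ring_of_integers :: "complex set \<Rightarrow> complex set" where
  "ring_of_integers K = {z \<in> K. alg_int z}"

definition span_over :: "complex set \<Rightarrow> complex set \<Rightarrow> complex set" where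
  "span_over R S = {(\<Sum>i<n. c i * x i) | (n::nat) c x. (\<forall>i<n. c i \<in> R \<and> x i \<in> S)}"

text \<open>Lambda is a finitely generated O-submodule of C with Lambda (x)_O K = K,
  i.e. its K-span K Lambda is a one-dimensional K-subspace of C.\<close>
definition is_K_lattice_module :: "complex set \<Rightarrow> complex set \<Rightarrow> bool" where
  "is_K_lattice_module K \<Lambda> \<longleftrightarrow>
     (\<exists>G. finite G \<and> \<Lambda> = span_over (ring_of_integers K) G) \<and>
     (\<exists>z. z \<noteq> 0 \<and> span_over K \<Lambda> = {k * z | k. k \<in> K})"

text \<open>phi : K/O \<rightarrow> K Lambda / Lambda is represented by a function f : K \<rightarrow> K Lambda
  (a lift on representatives); f represents an O-module map K/O \<rightarrow> K Lambda/Lambda iff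
  the following holds (values compared modulo Lambda).\<close>
definition is_K_lattice :: "complex set \<Rightarrow> complex set \<Rightarrow> (complex \<Rightarrow> complex) \<Rightarrow> bool" where
  "is_K_lattice K \<Lambda> f \<longleftrightarrow> is_K_lattice_module K \<Lambda> \<and>
     (\<forall>x\<in>K. f x \<in> span_over K \<Lambda>) \<and>
     (\<forall>x\<in>ring_of_integers K. f x \<in> \<Lambda>) \<and>
     (\<forall>x\<in>K. \<forall>y\<in>K. f (x + y) - f x - f y \<in> \<Lambda>) \<and>
     (\<forall>a\<in>ring_of_integers K. \<forall>x\<in>K. f (a * x) - a * f x \<in> \<Lambda>)"

definition K_lattice_eq :: "complex set \<Rightarrow> complex set \<times> (complex \<Rightarrow> complex) \<Rightarrow> complex set \<times> (complex \<Rightarrow> complex) \<Rightarrow> bool" where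
  "K_lattice_eq K L L' \<longleftrightarrow> fst L = fst L' \<and> (\<forall>x\<in>K. snd L x - snd L' x \<in> fst L)"

definition K_lattice_phi_zero :: "complex set \<Rightarrow> complex set \<times> (complex \<Rightarrow> complex) \<Rightarrow> bool" where
  "K_lattice_phi_zero K L \<longleftrightarrow> (\<forall>x\<in>K. snd L x \<in> fst L)"

definition commensurable :: "complex set \<Rightarrow> complex set \<times> (complex \<Rightarrow> complex) \<Rightarrow> complex set \<times> (complex \<Rightarrow> complex) \<Rightarrow> bool" where
  "commensurable K L L' \<longleftrightarrow> span_over K (fst L) = span_over K (fst L') \<and>
     (\<forall>x\<in>K. snd L x - snd L' x \<in> {u + v | u v. u \<in> fst L \<and> v \<in> fst L'})"

definition scale_K_lattice :: "complex \<Rightarrow> complex set \<times> (complex \<Rightarrow> complex) \<Rightarrow> complex set \<times> (complex \<Rightarrow> complex)" where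
  "scale_K_lattice c L = ((\<lambda>z. c * z) ` fst L, (\<lambda>x. c * snd L x))"

end

theory Submission
  imports Defs
begin

text \<open>
  Since \<open>\<Lambda>\<close> and \<open>c\<Lambda>\<close> span the same \<open>K\<close>-line, the scaling factor \<open>c\<close> lies in \<open>K\<close>.
  If \<open>c \<noteq> 1\<close>, pick a positive integer \<open>N\<close> with \<open>Nc \<in> \<int>[\<surd>-d]\<close>; then \<open>\<alpha> = N(1 - c)\<close> is a
  nonzero integer of \<open>K\<close>. Commensurability with \<open>L' = cL\<close> gives
  \<open>(1 - c)\<phi> \<in> \<Lambda> + c\<Lambda>\<close>, and multiplying by \<open>N\<close> lands in \<open>\<Lambda>\<close> because \<open>\<Lambda>\<close> is stable under
  \<open>\<int>[\<surd>-d]\<close>. Hence \<open>\<alpha>\<phi> \<equiv> 0\<close> modulo \<open>\<Lambda>\<close>, and \<open>\<O>\<close>-linearity gives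
  \<open>\<phi>(x) \<equiv> \<alpha>\<phi>(x/\<alpha>) \<equiv> 0\<close>; finally \<open>\<phi>' \<equiv> c\<phi> \<equiv> 0\<close> modulo \<open>\<Lambda>' = c\<Lambda>\<close>.
\<close>

lemma alternating_self_convolution_odd:
  fixes a :: "nat \<Rightarrow> 'a :: {idom, ring_char_0}"
  assumes "odd k"
  shows "(\<Sum>i\<le>k. a i * ((-1) ^ (k - i) * a (k - i))) = 0"
proof -
  let ?S = "\<Sum>i\<le>k. a i * ((-1) ^ (k - i) * a (k - i))"
  have "?S = (\<Sum>i\<le>k. a (k - i) * ((-1) ^ (k - (k - i)) * a (k - (k - i))))"
    by (rule sum.reindex_bij_witness[where i="\<lambda>i. k - i" and j="\<lambda>i. k - i"]) auto
  also have "\<dots> = (\<Sum>i\<le>k. - (a i * ((-1) ^ (k - i) * a (k - i))))"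
  proof (rule sum.cong)
    fix i assume "i \<in> {..k}"
    then have "(-1 :: 'a) ^ i = - ((-1) ^ (k - i))"
      using assms by (auto simp: minus_one_power_iff)
    with \<open>i \<in> {..k}\<close> show "a (k - i) * ((-1) ^ (k - (k - i)) * a (k - (k - i))) =
      - (a i * ((-1) ^ (k - i) * a (k - i)))"
      by (simp add: algebra_simps)
  qed simp
  also have "\<dots> = - ?S"
    by (simp add: sum_negf)
  finally show ?thesis
    by simp
qed

lemma coeff_mult_pcompose_minus_odd:
  fixes p :: "'a :: {idom, ring_char_0} poly"
  assumes "odd k"
  shows "coeff (p * pcompose p [:0, -1:]) k = 0"
  unfolding coeff_mult coeff_pcompose_linear mult.commute[of "(-1) ^ _"]
  using alternating_self_convolution_odd[OF assms] by (simp add: mult_ac)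

lemma degree_mult_pcompose_minus:
  fixes p :: "'a :: idom poly"
  shows "degree (p * pcompose p [:0, -1:]) = 2 * degree p"
proof (cases "p = 0")
  case False
  have "lead_coeff (pcompose p [:0, -1:]) \<noteq> 0"
    using False by (subst lead_coeff_comp) auto
  then have "pcompose p [:0, -1:] \<noteq> 0"
    by auto
  with False show ?thesis
    by (simp add: degree_mult_eq degree_pcompose)
qed simp

lemma lead_coeff_mult_pcompose_minus:
  fixes p :: "'a :: idom poly"
  shows "lead_coeff (p * pcompose p [:0, -1:]) = (-1) ^ degree p * lead_coeff p ^ 2"
  by (simp add: lead_coeff_mult lead_coeff_comp power2_eq_square)

text \<open>
  If \<open>p\<close> is a monic integer polynomial of degree \<open>n\<close> with \<open>p(z) = 0\<close> and \<open>w\<^sup>2 = D \<noteq> 0\<close>, then \<open>wz\<close> is a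
  root of \<open>(-D)\<^sup>n p(x/w) p(-x/w)\<close>. This polynomial is monic with integer coefficients because
  \<open>p(x) p(-x)\<close> only has even powers of \<open>x\<close>, and \<open>x\<^sup>2/w\<^sup>2 = x\<^sup>2/D\<close>.
\<close>
lemma algebraic_int_mult_sqrt_int:
  fixes w z :: "'a :: field_char_0"
  assumes "w * w \<in> \<int>" and "algebraic_int z"
  shows "algebraic_int (w * z)"
proof (cases "w = 0")
  case True
  then show ?thesis by simp
next
  case False
  from assms(1) obtain D where D: "w * w = of_int D"
    by (auto elim: Ints_cases)
  with False have "D \<noteq> 0"
    by auto
  from assms(2) obtain p where p1: "lead_coeff p = 1" and pZ: "\<forall>i. coeff p i \<in> \<int>" and pz: "poly p z = 0"
    by (auto simp: algebraic_int.simps)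
  define n where "n = degree p"
  define u where "u = inverse w"
  define P where "P = p * pcompose p [:0, -1:]"
  define R where "R = smult ((- of_int D) ^ n) (pcompose P [:0, u:])"
  have "u \<noteq> 0" and uu: "u * u = inverse (of_int D)"
    using False by (simp_all add: u_def flip: D inverse_mult_distrib)
  have degP: "degree P = 2 * n"
    by (simp add: P_def n_def degree_mult_pcompose_minus)
  have lcP: "lead_coeff P = (-1) ^ n"
    unfolding P_def lead_coeff_mult_pcompose_minus by (simp add: p1 n_def)
  have coeffR: "coeff R k = (- of_int D) ^ n * u ^ k * coeff P k" for k
    by (simp add: R_def coeff_pcompose_linear)
  have coeffR_even: "coeff R (2 * m) = (-1) ^ n * of_int D ^ (n - m) * coeff P (2 * m)" if "m \<le> n" for m
  proof -
    have "u ^ (2 * m) = inverse (of_int D) ^ m"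
      by (simp add: power_mult power2_eq_square uu)
    moreover have "(of_int D :: 'a) ^ n = of_int D ^ (n - m) * of_int D ^ m"
      using that by (simp flip: power_add)
    moreover have "of_int D ^ m * inverse (of_int D) ^ m = (1 :: 'a)"
      using \<open>D \<noteq> 0\<close> by (simp flip: power_mult_distrib)
    ultimately show ?thesis
      unfolding coeffR power_minus[of "of_int D"] by (simp add: mult.assoc)
  qed
  have "degree R = 2 * n"
    using \<open>D \<noteq> 0\<close> \<open>u \<noteq> 0\<close> by (simp add: R_def degree_pcompose degP)
  then have lcR: "lead_coeff R = 1"
    using coeffR_even[of n] lcP degP by simp
  have coeffR_Ints: "coeff R k \<in> \<int>" for k
  proof (cases "odd k \<or> k > 2 * n")
    case True
    then have "coeff P k = 0"
      using coeff_mult_pcompose_minus_odd[of k p] by (auto simp: coeff_eq_0 degP simp flip: P_def)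
    then show ?thesis
      by (simp add: coeffR)
  next
    case False
    then obtain m where "k = 2 * m" "m \<le> n"
      by (auto elim: evenE)
    moreover have "coeff P k \<in> \<int>"
      using pZ by (simp add: P_def coeff_mult coeff_pcompose_linear Ints_sum Ints_mult)
    ultimately show ?thesis
      using coeffR_even by simp
  qed
  have wzu: "w * z * u = z"
    using False by (simp add: u_def field_simps)
  have "poly R (w * z) = 0"
    by (simp add: R_def poly_pcompose P_def pz wzu)
  with lcR coeffR_Ints show ?thesis
    by (intro algebraic_int.intros[of R]) auto
qed

definition isqrt :: "nat \<Rightarrow> complex" where
  "isqrt d = \<i> * of_real (sqrt (real d))"

lemma isqrt_mult_self: "isqrt d * isqrt d = - of_nat d"
proof -
  have "of_real (sqrt (real d)) * of_real (sqrt (real d)) = (of_nat d :: complex)"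
    by (simp flip: of_real_mult)
  then show ?thesis
    by (simp add: isqrt_def mult_ac)
qed

lemma complex_of_real_of_rat: "complex_of_real (of_rat a) = of_rat a"
  by (cases a) (simp add: Fract_of_int_quotient of_rat_divide)

lemma imag_quad_field_iff:
  "x \<in> imag_quad_field d \<longleftrightarrow> (\<exists>a b :: rat. x = of_rat a + of_rat b * isqrt d)"
  by (simp add: imag_quad_field_def isqrt_def complex_of_real_of_rat mult.assoc)

lemma imag_quad_field_mult_formula:
  "(of_rat a + of_rat b * isqrt d) * (of_rat a' + of_rat b' * isqrt d) =
   of_rat (a * a' - of_nat d * b * b') + of_rat (a * b' + b * a') * isqrt d"
proof -
  have "(of_rat a + of_rat b * isqrt d) * (of_rat a' + of_rat b' * isqrt d) =
    of_rat a * of_rat a' + of_rat b * of_rat b' * (isqrt d * isqrt d)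
    + (of_rat a * of_rat b' + of_rat b * of_rat a') * isqrt d"
    by (simp add: algebra_simps)
  then show ?thesis
    by (simp add: isqrt_mult_self of_rat_add of_rat_diff of_rat_mult algebra_simps)
qed

lemma imag_quad_field_mult:
  "x \<in> imag_quad_field d \<Longrightarrow> y \<in> imag_quad_field d \<Longrightarrow> x * y \<in> imag_quad_field d"
  unfolding imag_quad_field_iff using imag_quad_field_mult_formula by blast

lemma imag_quad_field_of_int_isqrt:
  "of_int p + of_int q * isqrt d \<in> imag_quad_field d"
  unfolding imag_quad_field_iff by (metis of_rat_of_int_eq)

lemma imag_quad_field_inverse:
  assumes "x \<in> imag_quad_field d"
  shows "inverse x \<in> imag_quad_field d"
proof -
  from assms obtain a b where x: "x = of_rat a + of_rat b * isqrt d"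
    unfolding imag_quad_field_iff by blast
  define n where "n = a * a + of_nat d * b * b"
  have x_conj: "x * (of_rat a + of_rat (- b) * isqrt d) = of_rat n"
    unfolding x imag_quad_field_mult_formula by (simp add: n_def algebra_simps)
  show ?thesis
  proof (cases "n = 0")
    case True
    have "a * a + of_nat d * (b * b) = 0"
      using True by (simp add: n_def mult.assoc)
    moreover have "a * a \<ge> 0" "of_nat d * (b * b) \<ge> 0"
      by simp_all
    ultimately have "a = 0 \<and> (d = 0 \<or> b = 0)"
      by (simp add: add_nonneg_eq_0_iff)
    then have "x = 0"
      by (auto simp: x isqrt_def)
    then show ?thesis
      using imag_quad_field_of_int_isqrt[of 0 0 d] by simp
  next
    case False
    have "x * ((of_rat a + of_rat (- b) * isqrt d) / of_rat n) = 1"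
      using False by (simp add: x_conj)
    then have "inverse x = (of_rat a + of_rat (- b) * isqrt d) / of_rat n"
      by (rule inverse_unique)
    also have "\<dots> = of_rat (a / n) + of_rat (- b / n) * isqrt d"
      by (simp add: of_rat_divide of_rat_minus diff_divide_distrib)
    finally show ?thesis
      unfolding imag_quad_field_iff by blast
  qed
qed

lemma imag_quad_field_divide:
  "x \<in> imag_quad_field d \<Longrightarrow> y \<in> imag_quad_field d \<Longrightarrow> x / y \<in> imag_quad_field d"
  unfolding divide_inverse by (intro imag_quad_field_mult imag_quad_field_inverse)

lemma imag_quad_field_common_denominator:
  assumes "x \<in> imag_quad_field d"
  obtains N p q :: int where "N > 0" "of_int N * x = of_int p + of_int q * isqrt d"
proof -
  from assms obtain a b where x: "x = of_rat a + of_rat b * isqrt d"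
    unfolding imag_quad_field_iff by blast
  obtain pa qa where a: "a = of_int pa / of_int qa" "qa > 0"
    using quotient_of_div quotient_of_denom_pos by (metis prod.exhaust)
  obtain pb qb where b: "b = of_int pb / of_int qb" "qb > 0"
    using quotient_of_div quotient_of_denom_pos by (metis prod.exhaust)
  have num: "of_int qa * of_rat a = (of_int pa :: complex)" "of_int qb * of_rat b = (of_int pb :: complex)"
    using a b by (simp_all add: of_rat_divide)
  have "of_int (qa * qb) * x = of_int qb * (of_int qa * of_rat a) + of_int qa * (of_int qb * of_rat b) * isqrt d"
    by (simp add: x algebra_simps)
  also have "\<dots> = of_int (pa * qb) + of_int (pb * qa) * isqrt d"
    by (simp only: num) (simp add: algebra_simps)
  finally have "of_int (qa * qb) * x = of_int (pa * qb) + of_int (pb * qa) * isqrt d" .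
  with a b show ?thesis
    using that[of "qa * qb" "pa * qb" "pb * qa"] by simp
qed

lemma algebraic_int_quadratic:
  "algebraic_int (of_int p + of_int q * isqrt d)"
proof -
  define P :: "complex poly" where "P = [:of_int (p * p + int d * q * q), of_int (- 2 * p), 1:]"
  have "coeff P i \<in> \<int>" for i
    by (simp add: P_def coeff_pCons split: nat.splits)
  moreover have "poly P (of_int p + of_int q * isqrt d) = of_int q * of_int q * (isqrt d * isqrt d + of_nat d)"
    by (simp add: P_def algebra_simps)
  then have "poly P (of_int p + of_int q * isqrt d) = 0"
    by (simp add: isqrt_mult_self)
  ultimately show ?thesis
    by (intro algebraic_int.intros[of P]) (auto simp: P_def)
qed

lemma mem_ring_of_integers_iff: "z \<in> ring_of_integers K \<longleftrightarrow> z \<in> K \<and> algebraic_int z"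
  unfolding ring_of_integers_def alg_int_def algebraic_int_altdef_ipoly by (auto simp: conj_commute)

lemma quadratic_int_in_ring_of_integers:
  "of_int p + of_int q * isqrt d \<in> ring_of_integers (imag_quad_field d)"
  by (simp add: mem_ring_of_integers_iff imag_quad_field_of_int_isqrt algebraic_int_quadratic)

lemma ring_of_integers_mult_sqrt_int:
  assumes "w \<in> imag_quad_field d" "w * w \<in> \<int>" "z \<in> ring_of_integers (imag_quad_field d)"
  shows "w * z \<in> ring_of_integers (imag_quad_field d)"
  using assms by (simp add: mem_ring_of_integers_iff imag_quad_field_mult algebraic_int_mult_sqrt_int)

lemma span_over_single: "c \<in> R \<Longrightarrow> x \<in> S \<Longrightarrow> c * x \<in> span_over R S"
  unfolding span_over_def by (intro CollectI exI[of _ 1] exI[of _ "\<lambda>_. c"] exI[of _ "\<lambda>_. x"]) auto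

lemma span_over_add:
  assumes "x \<in> span_over R S" "y \<in> span_over R S"
  shows "x + y \<in> span_over R S"
proof -
  from assms(1) obtain n1 :: nat and c1 x1 where h1: "x = (\<Sum>i<n1. c1 i * x1 i)" "\<forall>i<n1. c1 i \<in> R \<and> x1 i \<in> S"
    unfolding span_over_def by blast
  from assms(2) obtain n2 :: nat and c2 x2 where h2: "y = (\<Sum>i<n2. c2 i * x2 i)" "\<forall>i<n2. c2 i \<in> R \<and> x2 i \<in> S"
    unfolding span_over_def by blast
  define c where "c i = (if i < n1 then c1 i else c2 (i - n1))" for i
  define xs where "xs i = (if i < n1 then x1 i else x2 (i - n1))" for i
  have "(\<Sum>i<n1 + n2. c i * xs i) = (\<Sum>i<n1. c i * xs i) + (\<Sum>i\<in>{n1..<n1+n2}. c i * xs i)"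
    by (subst sum.union_disjoint[symmetric]) (auto intro!: sum.cong)
  also have "(\<Sum>i<n1. c i * xs i) = x"
    unfolding h1 c_def xs_def by simp
  also have "(\<Sum>i\<in>{n1..<n1+n2}. c i * xs i) = (\<Sum>i<n2. c (i + n1) * xs (i + n1))"
    using sum.shift_bounds_nat_ivl[of "\<lambda>i. c i * xs i" 0 n1 n2]
    by (simp add: atLeast0LessThan add.commute)
  also have "\<dots> = y"
    unfolding h2 c_def xs_def by simp
  finally have "x + y = (\<Sum>i<n1 + n2. c i * xs i)"
    by simp
  moreover have "\<forall>i<n1 + n2. c i \<in> R \<and> xs i \<in> S"
    using h1(2) h2(2) by (auto simp: c_def xs_def)
  ultimately show ?thesis
    unfolding span_over_def by blast
qed

lemma span_over_mult:
  assumes "x \<in> span_over R S" and "\<And>r. r \<in> R \<Longrightarrow> a * r \<in> R"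
  shows "a * x \<in> span_over R S"
proof -
  from assms(1) obtain n :: nat and c xs where h: "x = (\<Sum>i<n. c i * xs i)" "\<forall>i<n. c i \<in> R \<and> xs i \<in> S"
    unfolding span_over_def by blast
  have "a * x = (\<Sum>i<n. (a * c i) * xs i)"
    unfolding h by (simp add: sum_distrib_left mult.assoc)
  moreover have "\<forall>i<n. a * c i \<in> R \<and> xs i \<in> S"
    using h(2) assms(2) by auto
  ultimately show ?thesis
    unfolding span_over_def by (intro CollectI exI[of _ n] exI[of _ "\<lambda>i. a * c i"] exI[of _ xs]) simp
qed

lemma span_over_eq_0:
  assumes "S \<subseteq> {0}" and "x \<in> span_over R S"
  shows "x = 0"
  using assms unfolding span_over_def by (auto intro!: sum.neutral)

lemma span_ring_of_integers_mult_quadratic_int: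
  assumes "v \<in> span_over (ring_of_integers (imag_quad_field d)) G"
  shows "(of_int p + of_int q * isqrt d) * v \<in> span_over (ring_of_integers (imag_quad_field d)) G"
proof -
  have mult: "w * u \<in> span_over (ring_of_integers (imag_quad_field d)) G"
    if "w \<in> imag_quad_field d" "w * w \<in> \<int>" "u \<in> span_over (ring_of_integers (imag_quad_field d)) G" for w u
    using that by (intro span_over_mult ring_of_integers_mult_sqrt_int)
  have "isqrt d \<in> imag_quad_field d" "of_int k \<in> imag_quad_field d" for k
    using imag_quad_field_of_int_isqrt[of 0 1 d] imag_quad_field_of_int_isqrt[of k 0 d] by simp_all
  then have "of_int p * v + of_int q * (isqrt d * v) \<in> span_over (ring_of_integers (imag_quad_field d)) G"
    using assms by (intro span_over_add mult) (auto simp: isqrt_mult_self)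
  then show ?thesis
    by (simp add: algebra_simps)
qed

lemma K_lattice_module_nonzero:
  assumes "is_K_lattice_module K \<Lambda>" and "1 \<in> K"
  obtains w where "w \<in> \<Lambda>" "w \<noteq> 0"
proof -
  from assms(1) obtain z where "z \<noteq> 0" "span_over K \<Lambda> = {k * z | k. k \<in> K}"
    unfolding is_K_lattice_module_def by blast
  with assms(2) have "z \<in> span_over K \<Lambda>" "z \<noteq> 0"
    by force+
  then show ?thesis
    using span_over_eq_0[of \<Lambda> z K] that by blast
qed

lemma K_lattice_scale_factor_in_field:
  assumes "is_K_lattice_module (imag_quad_field d) \<Lambda>"
    and "span_over (imag_quad_field d) \<Lambda> = span_over (imag_quad_field d) ((\<lambda>z. c * z) ` \<Lambda>)"
  shows "c \<in> imag_quad_field d"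
proof -
  let ?K = "imag_quad_field d"
  have one: "1 \<in> ?K"
    using imag_quad_field_of_int_isqrt[of 1 0 d] by simp
  from assms(1) obtain z where "z \<noteq> 0" and span: "span_over ?K \<Lambda> = {k * z | k. k \<in> ?K}"
    unfolding is_K_lattice_module_def by blast
  obtain w where "w \<in> \<Lambda>" "w \<noteq> 0"
    using K_lattice_module_nonzero[OF assms(1) one] .
  have "1 * w \<in> span_over ?K \<Lambda>"
    using one \<open>w \<in> \<Lambda>\<close> by (rule span_over_single)
  moreover have "1 * (c * w) \<in> span_over ?K \<Lambda>"
    unfolding assms(2) using one \<open>w \<in> \<Lambda>\<close> by (intro span_over_single) auto
  ultimately obtain k k' where "k \<in> ?K" "w = k * z" "k' \<in> ?K" "c * w = k' * z"
    unfolding span by auto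
  with \<open>z \<noteq> 0\<close> \<open>w \<noteq> 0\<close> have "c = k' / k"
    by (auto simp: field_simps)
  with \<open>k \<in> ?K\<close> \<open>k' \<in> ?K\<close> show ?thesis
    by (simp add: imag_quad_field_divide)
qed

lemma scale_K_lattice_one [simp]: "scale_K_lattice 1 L = L"
  by (simp add: scale_K_lattice_def)

lemma K_lattice_eq_sym:
  assumes "is_K_lattice_module (imag_quad_field d) (fst L)" "K_lattice_eq (imag_quad_field d) L L'"
  shows "K_lattice_eq (imag_quad_field d) L' L"
proof -
  have "(of_int (-1) + of_int 0 * isqrt d) * (snd L x - snd L' x) \<in> fst L" if "x \<in> imag_quad_field d" for x
    using assms that unfolding is_K_lattice_module_def K_lattice_eq_def
    by (metis span_ring_of_integers_mult_quadratic_int)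
  with assms(2) show ?thesis
    by (simp add: K_lattice_eq_def)
qed

lemma scaled_commensurable_phi_annihilated:
  fixes d :: nat and K :: "complex set"
  defines "K \<equiv> imag_quad_field d"
  assumes "is_K_lattice K \<Lambda> \<phi>" and "commensurable K (\<Lambda>, \<phi>) (\<Lambda>', \<phi>')"
    and "K_lattice_eq K (\<Lambda>', \<phi>') (scale_K_lattice c (\<Lambda>, \<phi>))"
    and "of_int N * c = of_int p + of_int q * isqrt d" and "y \<in> K"
  shows "(of_int N - of_int N * c) * \<phi> y \<in> \<Lambda>"
proof -
  from assms(2) obtain G where \<Lambda>: "\<Lambda> = span_over (ring_of_integers K) G"
    unfolding is_K_lattice_def is_K_lattice_module_def by blast
  from assms(4) have \<Lambda>': "\<Lambda>' = (\<lambda>z. c * z) ` \<Lambda>" and "\<phi>' y - c * \<phi> y \<in> \<Lambda>'"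
    using \<open>y \<in> K\<close> unfolding K_lattice_eq_def scale_K_lattice_def by auto
  then obtain v2 where "v2 \<in> \<Lambda>" "\<phi>' y - c * \<phi> y = c * v2"
    by auto
  from assms(3) \<open>y \<in> K\<close> obtain u v1 where "u \<in> \<Lambda>" "v1 \<in> \<Lambda>" "\<phi> y - \<phi>' y = u + c * v1"
    unfolding commensurable_def \<Lambda>' by auto
  have "(of_int N - of_int N * c) * \<phi> y = of_int N * (\<phi> y - \<phi>' y) + of_int N * (\<phi>' y - c * \<phi> y)"
    by (simp add: algebra_simps)
  also have "\<dots> = (of_int N + of_int 0 * isqrt d) * u + (of_int p + of_int q * isqrt d) * (v1 + v2)"
    by (simp add: \<open>\<phi> y - \<phi>' y = u + c * v1\<close> \<open>\<phi>' y - c * \<phi> y = c * v2\<close> flip: assms(5))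
      (simp add: algebra_simps)
  also have "\<dots> \<in> \<Lambda>"
    using \<open>u \<in> \<Lambda>\<close> \<open>v1 \<in> \<Lambda>\<close> \<open>v2 \<in> \<Lambda>\<close> unfolding \<Lambda> K_def
    by (intro span_over_add span_ring_of_integers_mult_quadratic_int)
  finally show ?thesis .
qed

lemma K_lattice_phi_zero_if_annihilated:
  fixes d :: nat and K :: "complex set"
  defines "K \<equiv> imag_quad_field d"
  assumes "is_K_lattice K \<Lambda> \<phi>" and "\<alpha> \<in> ring_of_integers K" "\<alpha> \<noteq> 0"
    and "\<And>y. y \<in> K \<Longrightarrow> \<alpha> * \<phi> y \<in> \<Lambda>"
  shows "K_lattice_phi_zero K (\<Lambda>, \<phi>)"
  unfolding K_lattice_phi_zero_def
proof (intro ballI, simp only: fst_conv snd_conv)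
  fix x assume "x \<in> K"
  from assms(2) obtain G where \<Lambda>: "\<Lambda> = span_over (ring_of_integers K) G"
    and lin: "\<forall>a\<in>ring_of_integers K. \<forall>y\<in>K. \<phi> (a * y) - a * \<phi> y \<in> \<Lambda>"
    unfolding is_K_lattice_def is_K_lattice_module_def by blast
  have "\<alpha> \<in> K"
    using assms(3) by (simp add: mem_ring_of_integers_iff)
  with \<open>x \<in> K\<close> have "x / \<alpha> \<in> K"
    unfolding K_def by (rule imag_quad_field_divide)
  then have "\<phi> (\<alpha> * (x / \<alpha>)) - \<alpha> * \<phi> (x / \<alpha>) \<in> \<Lambda>" "\<alpha> * \<phi> (x / \<alpha>) \<in> \<Lambda>"
    using lin assms(3,5) by blast+
  then have "(\<phi> (\<alpha> * (x / \<alpha>)) - \<alpha> * \<phi> (x / \<alpha>)) + \<alpha> * \<phi> (x / \<alpha>) \<in> \<Lambda>"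
    unfolding \<Lambda> by (rule span_over_add)
  with \<open>\<alpha> \<noteq> 0\<close> show "\<phi> x \<in> \<Lambda>"
    by simp
qed

lemma K_lattice_phi_zero_scale:
  assumes "is_K_lattice K \<Lambda>' \<phi>'" and "K_lattice_eq K (\<Lambda>', \<phi>') (scale_K_lattice c (\<Lambda>, \<phi>))"
    and "K_lattice_phi_zero K (\<Lambda>, \<phi>)"
  shows "K_lattice_phi_zero K (\<Lambda>', \<phi>')"
  unfolding K_lattice_phi_zero_def
proof (intro ballI, simp only: fst_conv snd_conv)
  fix x assume "x \<in> K"
  from assms(1) obtain G' where \<Lambda>': "\<Lambda>' = span_over (ring_of_integers K) G'"
    unfolding is_K_lattice_def is_K_lattice_module_def by blast
  from assms(2,3) \<open>x \<in> K\<close> have "\<phi>' x - c * \<phi> x \<in> \<Lambda>'" "c * \<phi> x \<in> \<Lambda>'"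
    unfolding K_lattice_eq_def K_lattice_phi_zero_def scale_K_lattice_def by auto
  then have "(\<phi>' x - c * \<phi> x) + c * \<phi> x \<in> \<Lambda>'"
    unfolding \<Lambda>' by (rule span_over_add)
  then show "\<phi>' x \<in> \<Lambda>'"
    by simp
qed

theorem mainTheorem14:
  fixes d :: nat and \<Lambda> \<Lambda>' :: "complex set" and \<phi> \<phi>' :: "complex \<Rightarrow> complex" and c :: complex
  defines "K \<equiv> imag_quad_field d"
  assumes "d > 0" and "squarefree d"
    and "is_K_lattice K \<Lambda> \<phi>" and "is_K_lattice K \<Lambda>' \<phi>'"
    and "commensurable K (\<Lambda>, \<phi>) (\<Lambda>', \<phi>')"
    and "c \<noteq> 0" and "K_lattice_eq K (\<Lambda>', \<phi>') (scale_K_lattice c (\<Lambda>, \<phi>))"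
  shows "K_lattice_eq K (\<Lambda>, \<phi>) (\<Lambda>', \<phi>') \<or>
         (K_lattice_phi_zero K (\<Lambda>, \<phi>) \<and> K_lattice_phi_zero K (\<Lambda>', \<phi>'))"
proof (cases "c = 1")
  case True
  have "is_K_lattice_module K \<Lambda>'"
    using assms(5) by (simp add: is_K_lattice_def)
  with assms(8) True show ?thesis
    unfolding K_def by (auto intro: K_lattice_eq_sym)
next
  case False
  have "span_over K \<Lambda> = span_over K ((\<lambda>z. c * z) ` \<Lambda>)"
    using assms(6,8) by (simp add: commensurable_def K_lattice_eq_def scale_K_lattice_def)
  then have "c \<in> K"
    using assms(4) unfolding K_def is_K_lattice_def by (blast intro: K_lattice_scale_factor_in_field)
  then obtain N p q :: int where "N > 0" and Nc: "of_int N * c = of_int p + of_int q * isqrt d"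
    unfolding K_def by (rule imag_quad_field_common_denominator)
  define \<alpha> where "\<alpha> = of_int N - of_int N * c"
  have "\<alpha> = of_int (N - p) + of_int (- q) * isqrt d"
    by (simp add: \<alpha>_def Nc)
  then have "\<alpha> \<in> ring_of_integers K"
    unfolding K_def by (simp only: quadratic_int_in_ring_of_integers)
  moreover have "\<alpha> \<noteq> 0"
    using False \<open>N > 0\<close> by (simp add: \<alpha>_def)
  moreover have "\<alpha> * \<phi> y \<in> \<Lambda>" if "y \<in> K" for y
    unfolding \<alpha>_def using assms(4,6,8) Nc that unfolding K_def by (rule scaled_commensurable_phi_annihilated)
  ultimately have "K_lattice_phi_zero K (\<Lambda>, \<phi>)"
    unfolding K_def by (rule K_lattice_phi_zero_if_annihilated[OF assms(4)[unfolded K_def]])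
  with assms(5,8) show ?thesis
    by (blast intro: K_lattice_phi_zero_scale)
qed

end
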